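(* Let $R$ be the root system of a complex simple Lie algebra $\mathfrak g$, with positive roots $R_+$, $\rho=\frac12\sum_{\mu\in R_+}\mu$, maximal root $\lambda_{ad}$, and let $(\cdot,\cdot)$ be the minimal invariant bilinear form on $\mathfrak h^*$ (the $W$-invariant form normalised so that the maximal root has square length $2$). Let $\alpha,\beta,\gamma$ be the Vogel parameters of $\mathfrak g$ listed below and $t=\alpha+\beta+\gamma$. Then for any function $\phi$ of one real variable which is even or odd, and such that $\phi((\mu,\rho))\neq 0$ for all $\mu\in R_+$ and $\phi(\alpha/2),\phi(\beta/2),\phi(\gamma/2)\neq 0$, $$\prod_{\mu\in R_+}\frac{\phi((\mu,\lambda_{ad}+\rho))}{\phi((\mu,\rho))}=\frac{\phi((\alpha-2t)/2)}{\phi(\alpha/2)}\cdot\frac{\phi((\beta-2t)/2)}{\phi(\beta/2)}\cdot\frac{\phi((\gamma-2t)/2)}{\phi(\gamma/2)}.$$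
   Context: $\mathfrak h$ is a Cartan subalgebra of $\mathfrak g$, $R\subset\mathfrak h^*$ the set of roots, $W$ the Weyl group. Vogel parameters $(\alpha,\beta,\gamma)$: $A_n=\mathfrak{sl}_{n+1}$: $(-2,2,n+1)$; $B_n=\mathfrak{so}_{2n+1}$: $(-2,4,2n-3)$; $C_n=\mathfrak{sp}_{2n}$: $(-2,1,n+2)$; $D_n=\mathfrak{so}_{2n}$: $(-2,4,2n-4)$; $G_2$: $(-2,10/3,8/3)$; $F_4$: $(-2,5,6)$; $E_6$: $(-2,6,8)$; $E_7$: $(-2,8,12)$; $E_8$: $(-2,12,20)$. *)

theory Defs
  imports Complex_Main
begin

text \<open>Weights/roots are represented concretely as coordinate vectors
  \<open>nat \<Rightarrow> real\<close> (only finitely many coordinates are nonzero), in the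
  standard (Bourbaki, Planches I--IX) realisations of the irreducible root systems,
  indexed from 0.\<close>

type_synonym vec = "nat \<Rightarrow> real"

definition ev :: "nat \<Rightarrow> vec" where
  "ev i = (\<lambda>k. if k = i then 1 else 0)"

definition vadd :: "vec \<Rightarrow> vec \<Rightarrow> vec" where
  "vadd x y = (\<lambda>k. x k + y k)"

definition vsub :: "vec \<Rightarrow> vec \<Rightarrow> vec" where
  "vsub x y = (\<lambda>k. x k - y k)"

definition vscale :: "real \<Rightarrow> vec \<Rightarrow> vec" where
  "vscale c x = (\<lambda>k. c * x k)"

definition halfvec :: "nat \<Rightarrow> nat set \<Rightarrow> vec \<Rightarrow> vec" where
  "halfvec m S tail = (\<lambda>k. if k < m then (if k \<in> S then -1/2 else 1/2) else tail k)"

datatype lie_type = A nat | B nat | C nat | D nat | G2 | F4 | E6 | E7 | E8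

fun valid_type :: "lie_type \<Rightarrow> bool" where
  "valid_type (A n) = (n \<ge> 1)"
| "valid_type (B n) = (n \<ge> 2)"
| "valid_type (C n) = (n \<ge> 3)"
| "valid_type (D n) = (n \<ge> 4)"
| "valid_type _ = True"

fun amb_dim :: "lie_type \<Rightarrow> nat" where
  "amb_dim (A n) = n + 1"
| "amb_dim (B n) = n"
| "amb_dim (C n) = n"
| "amb_dim (D n) = n"
| "amb_dim G2 = 3"
| "amb_dim F4 = 4"
| "amb_dim E6 = 8"
| "amb_dim E7 = 8"
| "amb_dim E8 = 8"

fun posroots :: "lie_type \<Rightarrow> vec set" where
  "posroots (A n) = {vsub (ev i) (ev j) | i j. i < j \<and> j \<le> n}"
| "posroots (B n) = {vsub (ev i) (ev j) | i j. i < j \<and> j < n}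
                  \<union> {vadd (ev i) (ev j) | i j. i < j \<and> j < n}
                  \<union> {ev i | i. i < n}"
| "posroots (C n) = {vsub (ev i) (ev j) | i j. i < j \<and> j < n}
                  \<union> {vadd (ev i) (ev j) | i j. i < j \<and> j < n}
                  \<union> {vscale 2 (ev i) | i. i < n}"
| "posroots (D n) = {vsub (ev i) (ev j) | i j. i < j \<and> j < n}
                  \<union> {vadd (ev i) (ev j) | i j. i < j \<and> j < n}"
| "posroots G2 = {vsub (ev 0) (ev 1),
                  vadd (vscale (-2) (ev 0)) (vadd (ev 1) (ev 2)),
                  vsub (ev 2) (ev 0),
                  vsub (ev 2) (ev 1),
                  vadd (vsub (ev 0) (vscale 2 (ev 1))) (ev 2),
                  vsub (vscale 2 (ev 2)) (vadd (ev 0) (ev 1))}"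
| "posroots F4 = {vsub (ev i) (ev j) | i j. i < j \<and> j < 4}
                  \<union> {vadd (ev i) (ev j) | i j. i < j \<and> j < 4}
                  \<union> {ev i | i. i < 4}
                  \<union> {halfvec 4 S (\<lambda>_. 0) | S. S \<subseteq> {1,2,3}}"
| "posroots E6 = {vsub (ev j) (ev i) | i j. i < j \<and> j < 5}
                  \<union> {vadd (ev i) (ev j) | i j. i < j \<and> j < 5}
                  \<union> {halfvec 5 S (\<lambda>k. if k = 5 \<or> k = 6 then -1/2 else if k = 7 then 1/2 else 0)
                      | S. S \<subseteq> {..<5} \<and> even (card S)}"
| "posroots E7 = {vsub (ev j) (ev i) | i j. i < j \<and> j < 6}
                  \<union> {vadd (ev i) (ev j) | i j. i < j \<and> j < 6}
                  \<union> {vsub (ev 7) (ev 6)}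
                  \<union> {halfvec 6 S (\<lambda>k. if k = 6 then -1/2 else if k = 7 then 1/2 else 0)
                      | S. S \<subseteq> {..<6} \<and> odd (card S)}"
| "posroots E8 = {vsub (ev j) (ev i) | i j. i < j \<and> j < 8}
                  \<union> {vadd (ev i) (ev j) | i j. i < j \<and> j < 8}
                  \<union> {halfvec 7 S (\<lambda>k. if k = 7 then 1/2 else 0)
                      | S. S \<subseteq> {..<7} \<and> even (card S)}"

fun max_root :: "lie_type \<Rightarrow> vec" where
  "max_root (A n) = vsub (ev 0) (ev n)"
| "max_root (B n) = vadd (ev 0) (ev 1)"
| "max_root (C n) = vscale 2 (ev 0)"
| "max_root (D n) = vadd (ev 0) (ev 1)"
| "max_root G2 = vsub (vscale 2 (ev 2)) (vadd (ev 0) (ev 1))"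
| "max_root F4 = vadd (ev 0) (ev 1)"
| "max_root E6 = halfvec 5 {} (\<lambda>k. if k = 5 \<or> k = 6 then -1/2 else if k = 7 then 1/2 else 0)"
| "max_root E7 = vsub (ev 7) (ev 6)"
| "max_root E8 = vadd (ev 6) (ev 7)"

definition eucl :: "lie_type \<Rightarrow> vec \<Rightarrow> vec \<Rightarrow> real" where
  "eucl T x y = (\<Sum>k<amb_dim T. x k * y k)"

text \<open>The minimal invariant form: the W-invariant form (a multiple of the
  Euclidean one, the root system being irreducible) normalised so that the maximal
  root has square length 2.\<close>
definition minform :: "lie_type \<Rightarrow> vec \<Rightarrow> vec \<Rightarrow> real" where
  "minform T x y = 2 * eucl T x y / eucl T (max_root T) (max_root T)"

definition rho :: "lie_type \<Rightarrow> vec" where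
  "rho T = (\<lambda>k. (1/2) * (\<Sum>\<mu>\<in>posroots T. \<mu> k))"

fun vogel :: "lie_type \<Rightarrow> real \<times> real \<times> real" where
  "vogel (A n) = (-2, 2, real n + 1)"
| "vogel (B n) = (-2, 4, 2 * real n - 3)"
| "vogel (C n) = (-2, 1, real n + 2)"
| "vogel (D n) = (-2, 4, 2 * real n - 4)"
| "vogel G2 = (-2, 10/3, 8/3)"
| "vogel F4 = (-2, 5, 6)"
| "vogel E6 = (-2, 6, 8)"
| "vogel E7 = (-2, 8, 12)"
| "vogel E8 = (-2, 12, 20)"

end

theory Submission
  imports Defs "HOL-Library.Multiset"
begin

text \<open>
  The proof goes through the Cartan types one by one, in Bourbaki's coordinates.  Since
  \<open>\<alpha> = -2\<close> for every type, parity of \<open>\<phi>\<close> turns all arguments on the right-hand side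
  positive, and it becomes \<open>\<phi>(t+1) \<phi>(t-\<beta>/2) \<phi>(t-\<gamma>/2) / (\<phi>(1) \<phi>(\<beta>/2) \<phi>(\<gamma>/2))\<close>.
  On the left only the roots \<open>\<mu>\<close> with \<open>(\<mu>, \<lambda>\<^sub>a\<^sub>d) \<noteq> 0\<close> contribute.  For the classical
  series they lie in a few rows (\<open>e\<^sub>0 \<plusminus> e\<^sub>j\<close>, \<open>e\<^sub>1 \<plusminus> e\<^sub>j\<close>, \<open>e\<^sub>i - e\<^sub>n\<close>, \<dots>) along which the
  arguments of \<open>\<phi>\<close> run through arithmetic progressions and the shift \<open>(\<mu>, \<lambda>\<^sub>a\<^sub>d)\<close> is one
  or two steps, so every row telescopes.  For the exceptional types the identity is an
  equality of multisets of values \<open>(\<mu>, \<lambda>\<^sub>a\<^sub>d + \<rho>)\<close> and \<open>(\<mu>, \<rho>)\<close>, extended by the six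
  arguments of the right-hand side, which is checked by computation.
\<close>

text \<open>
  For \<open>\<phi> = id\<close> this is Weyl's formula for \<open>dim \<g>\<close>; for \<open>\<phi> x = sinh (h x / 2)\<close> it is the
  quantum dimension of the adjoint representation.
\<close>

definition adjoint_product :: "lie_type \<Rightarrow> (real \<Rightarrow> real) \<Rightarrow> real" where
  "adjoint_product T \<phi> = (\<Prod>\<mu>\<in>posroots T.
     \<phi> (minform T \<mu> (vadd (max_root T) (rho T))) / \<phi> (minform T \<mu> (rho T)))"

definition vogel_rhs :: "(real \<Rightarrow> real) \<Rightarrow> real \<times> real \<times> real \<Rightarrow> real" where
  "vogel_rhs \<phi> v = (case v of (\<alpha>, \<beta>, \<gamma>) \<Rightarrow> let t = \<alpha> + \<beta> + \<gamma> in
     \<phi> ((\<alpha> - 2 * t) / 2) / \<phi> (\<alpha> / 2) * (\<phi> ((\<beta> - 2 * t) / 2) / \<phi> (\<beta> / 2))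
       * (\<phi> ((\<gamma> - 2 * t) / 2) / \<phi> (\<gamma> / 2)))"

definition even_or_odd :: "(real \<Rightarrow> real) \<Rightarrow> bool" where
  "even_or_odd \<phi> \<longleftrightarrow> (\<forall>x. \<phi> (- x) = \<phi> x) \<or> (\<forall>x. \<phi> (- x) = - \<phi> x)"

lemma even_or_odd_minus_divide: "even_or_odd \<phi> \<Longrightarrow> \<phi> (- x) / \<phi> (- y) = \<phi> x / \<phi> y"
  by (auto simp: even_or_odd_def)

lemma even_or_odd_minus_mult: "even_or_odd \<phi> \<Longrightarrow> \<phi> (- x) * \<phi> (- y) = \<phi> x * \<phi> y"
  by (auto simp: even_or_odd_def)

lemma vogel_rhs_minus_two:
  assumes "even_or_odd \<phi>"
  shows "vogel_rhs \<phi> (-2, \<beta>, \<gamma>) = \<phi> (\<beta> + \<gamma> - 1) / \<phi> 1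
           * (\<phi> (\<beta> / 2 + \<gamma> - 2) / \<phi> (\<beta> / 2)) * (\<phi> (\<beta> + \<gamma> / 2 - 2) / \<phi> (\<gamma> / 2))"
proof -
  define t where "t = -2 + \<beta> + \<gamma>"
  have "(-2 - 2 * t) / 2 = - (\<beta> + \<gamma> - 1)" "(\<beta> - 2 * t) / 2 = - (\<beta> / 2 + \<gamma> - 2)"
    "(\<gamma> - 2 * t) / 2 = - (\<beta> + \<gamma> / 2 - 2)" "-2 / 2 = - (1::real)"
    by (simp_all add: t_def field_simps)
  then have "vogel_rhs \<phi> (-2, \<beta>, \<gamma>) = \<phi> (- (\<beta> + \<gamma> - 1)) / \<phi> (- 1)
      * (\<phi> (- (\<beta> / 2 + \<gamma> - 2)) * \<phi> (- (\<beta> + \<gamma> / 2 - 2)) / (\<phi> (\<beta> / 2) * \<phi> (\<gamma> / 2)))"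
    unfolding vogel_rhs_def Let_def prod.case t_def[symmetric]
    by (simp only: times_divide_times_eq mult.assoc)
  then show ?thesis
    by (simp only: even_or_odd_minus_divide[OF assms] even_or_odd_minus_mult[OF assms]) simp
qed

section \<open>Telescoping products\<close>

text \<open>
  Telescoping identities multiplied through by a boundary value, so that only the
  denominators inside the product have to be non-zero.
\<close>

lemma prod_telescope_mult:
  fixes g :: "nat \<Rightarrow> 'a::field"
  assumes "a \<le> b" "\<forall>j\<in>{a..<b}. g j \<noteq> 0"
  shows "(\<Prod>j\<in>{a..<b}. g (Suc j) / g j) * g a = g b"
  using assms
proof (induction b rule: dec_induct)
  case (step n)
  have "(\<Prod>j\<in>{a..<Suc n}. g (Suc j) / g j) * g a
      = (\<Prod>j\<in>{a..<n}. g (Suc j) / g j) * g a * (g (Suc n) / g n)"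
    using step.hyps by (simp add: prod.atLeastLessThan_Suc mult_ac)
  also have "\<dots> = g (Suc n)"
    using step by simp
  finally show ?case .
qed simp

lemma prod_telescope_mult':
  fixes g :: "nat \<Rightarrow> 'a::field"
  assumes "a \<le> b" "\<forall>j\<in>{a..<b}. g (Suc j) \<noteq> 0"
  shows "(\<Prod>j\<in>{a..<b}. g j / g (Suc j)) * g b = g a"
  using assms
proof (induction b rule: dec_induct)
  case (step n)
  have "(\<Prod>j\<in>{a..<Suc n}. g j / g (Suc j)) * g (Suc n)
      = (\<Prod>j\<in>{a..<n}. g j / g (Suc j)) * g n * (g (Suc n) / g (Suc n))"
    using step.hyps by (simp add: prod.atLeastLessThan_Suc mult_ac)
  also have "\<dots> = g a"
    using step by simp
  finally show ?case .
qed simp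

lemma prod_telescope2_mult:
  fixes g :: "nat \<Rightarrow> 'a::field"
  assumes "a \<le> b" "\<forall>j\<in>{a..<b}. g j \<noteq> 0"
  shows "(\<Prod>j\<in>{a..<b}. g (j + 2) / g j) * (g a * g (Suc a)) = g b * g (Suc b)"
  using assms
proof (induction b rule: dec_induct)
  case (step n)
  have "(\<Prod>j\<in>{a..<Suc n}. g (j + 2) / g j) * (g a * g (Suc a))
      = (\<Prod>j\<in>{a..<n}. g (j + 2) / g j) * (g a * g (Suc a)) * (g (n + 2) / g n)"
    using step.hyps by (simp add: prod.atLeastLessThan_Suc mult_ac)
  also have "\<dots> = g (Suc n) * g (Suc (Suc n))"
    using step by (simp add: numeral_2_eq_2)
  finally show ?case .
qed simp

lemma prod_telescope2_mult':
  fixes g :: "nat \<Rightarrow> 'a::field"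
  assumes "a \<le> b" "\<forall>j\<in>{a..<b}. g (j + 2) \<noteq> 0"
  shows "(\<Prod>j\<in>{a..<b}. g j / g (j + 2)) * (g b * g (Suc b)) = g a * g (Suc a)"
  using assms
proof (induction b rule: dec_induct)
  case (step n)
  have "(\<Prod>j\<in>{a..<Suc n}. g j / g (j + 2)) * (g (Suc n) * g (Suc (Suc n)))
      = (\<Prod>j\<in>{a..<n}. g j / g (j + 2)) * (g n * g (Suc n)) * (g (n + 2) / g (n + 2))"
    using step.hyps by (simp add: prod.atLeastLessThan_Suc mult_ac numeral_2_eq_2)
  also have "\<dots> = g a * g (Suc a)"
    using step by simp
  finally show ?case .
qed simp

lemma prod_lessThan_eq_prefix:
  fixes k m :: nat
  assumes "k \<le> m" "\<forall>i\<in>{k..<m}. f i = 1"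
  shows "(\<Prod>i<m. f i) = (\<Prod>i<k. f i)"
proof (rule prod.mono_neutral_right)
  show "\<forall>i\<in>{..<m} - {..<k}. f i = 1"
    using assms(2) by auto
qed (use assms(1) in auto)

lemma prod_triangle_one_row:
  fixes F :: "nat \<Rightarrow> nat \<Rightarrow> 'a::comm_monoid_mult"
  assumes "\<And>i j. 1 \<le> i \<Longrightarrow> i < j \<Longrightarrow> j < n \<Longrightarrow> F i j = 1"
  shows "(\<Prod>j<n. \<Prod>i<j. F i j) = (\<Prod>j\<in>{1..<n}. F 0 j)"
proof -
  have "(\<Prod>j<n. \<Prod>i<j. F i j) = (\<Prod>j\<in>{1..<n}. \<Prod>i<j. F i j)"
    by (rule prod.mono_neutral_right) (auto simp: Suc_le_eq)
  also have "\<dots> = (\<Prod>j\<in>{1..<n}. \<Prod>i<1. F i j)"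
    using assms by (intro prod.cong refl prod_lessThan_eq_prefix) auto
  finally show ?thesis
    by simp
qed

lemma prod_triangle_two_rows:
  fixes F :: "nat \<Rightarrow> nat \<Rightarrow> 'a::comm_monoid_mult"
  assumes "2 \<le> n" "\<And>i j. 2 \<le> i \<Longrightarrow> i < j \<Longrightarrow> j < n \<Longrightarrow> F i j = 1"
  shows "(\<Prod>j<n. \<Prod>i<j. F i j) = F 0 1 * (\<Prod>j\<in>{2..<n}. F 0 j * F 1 j)"
proof -
  have "(\<Prod>j<n. \<Prod>i<j. F i j) = F 0 1 * (\<Prod>j\<in>{2..<n}. \<Prod>i<j. F i j)"
    using assms(1)
    by (simp add: lessThan_atLeast0 prod.atLeast_Suc_lessThan numeral_2_eq_2 del: prod.op_ivl_Suc)
  also have "(\<Prod>j\<in>{2..<n}. \<Prod>i<j. F i j) = (\<Prod>j\<in>{2..<n}. \<Prod>i<2. F i j)"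
    using assms(2) by (intro prod.cong refl prod_lessThan_eq_prefix) auto
  finally show ?thesis
    by (simp add: numeral_2_eq_2)
qed

lemma ev_apply [simp]: "ev i k = (if k = i then 1 else 0)"
  by (simp add: ev_def)

lemma vadd_apply [simp]: "vadd x y k = x k + y k"
  by (simp add: vadd_def)

lemma vsub_apply [simp]: "vsub x y k = x k - y k"
  by (simp add: vsub_def)

lemma vscale_apply [simp]: "vscale c x k = c * x k"
  by (simp add: vscale_def)

lemma eucl_ev: "i < amb_dim T \<Longrightarrow> eucl T (ev i) x = x i"
  by (simp add: eucl_def if_distrib[of "\<lambda>c. c * _"] cong: if_cong)

lemma eucl_vsub: "eucl T (vsub u v) x = eucl T u x - eucl T v x"
  by (simp add: eucl_def left_diff_distrib sum_subtractf)

lemma eucl_vadd: "eucl T (vadd u v) x = eucl T u x + eucl T v x"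
  by (simp add: eucl_def distrib_right sum.distrib)

lemma eucl_vscale: "eucl T (vscale c u) x = c * eucl T u x"
  by (simp add: eucl_def sum_distrib_left mult.assoc)

lemma minform_eq_eucl: "eucl T (max_root T) (max_root T) = 2 \<Longrightarrow> minform T x y = eucl T x y"
  by (simp add: minform_def)

section \<open>The classical root systems\<close>

definition diff_roots :: "nat \<Rightarrow> vec set" where
  "diff_roots n = {vsub (ev i) (ev j) | i j. i < j \<and> j < n}"

definition sum_roots :: "nat \<Rightarrow> vec set" where
  "sum_roots n = {vadd (ev i) (ev j) | i j. i < j \<and> j < n}"

lemma posroots_A: "posroots (A n) = diff_roots (Suc n)"
  by (auto simp: diff_roots_def less_Suc_eq_le)

lemma posroots_B: "posroots (B n) = diff_roots n \<union> sum_roots n \<union> ev ` {..<n}"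
  by (auto simp: diff_roots_def sum_roots_def)

lemma posroots_C:
  "posroots (C n) = diff_roots n \<union> sum_roots n \<union> (\<lambda>i. vscale 2 (ev i)) ` {..<n}"
  by (auto simp: diff_roots_def sum_roots_def)

lemma posroots_D: "posroots (D n) = diff_roots n \<union> sum_roots n"
  by (simp add: diff_roots_def sum_roots_def)

lemma diff_roots_eq_image:
  "diff_roots n = (\<lambda>(j, i). vsub (ev i) (ev j)) ` (SIGMA j:{..<n}. {..<j})"
  by (auto simp: diff_roots_def)

lemma sum_roots_eq_image:
  "sum_roots n = (\<lambda>(j, i). vadd (ev i) (ev j)) ` (SIGMA j:{..<n}. {..<j})"
  by (auto simp: sum_roots_def)

lemma inj_on_diff_root: "inj_on (\<lambda>(j, i). vsub (ev i) (ev j)) (SIGMA j:{..<n}. {..<j})"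
proof (rule inj_onI, clarify)
  fix i j i' j' :: nat
  assume eq: "vsub (ev i) (ev j) = vsub (ev i') (ev j')" and "i < j" "i' < j'"
  have "vsub (ev i) (ev j) j = vsub (ev i') (ev j') j" "vsub (ev i) (ev j) i = vsub (ev i') (ev j') i"
    using eq by simp_all
  with \<open>i < j\<close> \<open>i' < j'\<close> show "j = j' \<and> i = i'"
    by (auto split: if_splits)
qed

lemma inj_on_sum_root: "inj_on (\<lambda>(j, i). vadd (ev i) (ev j)) (SIGMA j:{..<n}. {..<j})"
proof (rule inj_onI, clarify)
  fix i j i' j' :: nat
  assume eq: "vadd (ev i) (ev j) = vadd (ev i') (ev j')" and "i < j" "i' < j'"
  have "vadd (ev i) (ev j) i = vadd (ev i') (ev j') i" "vadd (ev i) (ev j) j = vadd (ev i') (ev j') j"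
    "vadd (ev i) (ev j) i' = vadd (ev i') (ev j') i'"
    using eq by simp_all
  with \<open>i < j\<close> \<open>i' < j'\<close> show "j = j' \<and> i = i'"
    by (auto split: if_splits)
qed

lemma inj_ev: "inj ev"
proof (rule injI)
  fix i j :: nat
  assume "ev i = ev j"
  then have "ev i i = ev j i"
    by simp
  then show "i = j"
    by (simp split: if_splits)
qed

lemma inj_scaled_ev: "inj (\<lambda>k. vscale 2 (ev k))"
proof (rule injI)
  fix i j :: nat
  assume "vscale 2 (ev i) = vscale 2 (ev j)"
  then have "vscale 2 (ev i) i = vscale 2 (ev j) i"
    by simp
  then show "i = j"
    by (simp split: if_splits)
qed

lemma finite_diff_roots: "finite (diff_roots n)"
  by (simp add: diff_roots_eq_image)

lemma finite_sum_roots: "finite (sum_roots n)"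
  by (simp add: sum_roots_eq_image)

lemma diff_roots_disjoint_nonneg: "diff_roots n \<inter> {x. \<forall>k. 0 \<le> x k} = {}"
proof -
  have "\<not> (\<forall>k. 0 \<le> x k)" if x: "x \<in> diff_roots n" for x
  proof -
    obtain i j where "x = vsub (ev i) (ev j)" "i < j"
      using x unfolding diff_roots_def by blast
    then have "x j < 0"
      by simp
    then show ?thesis
      by (auto simp: not_le)
  qed
  then show ?thesis
    by blast
qed

lemma sum_roots_nonneg: "sum_roots n \<subseteq> {x. \<forall>k. 0 \<le> x k}"
  by (auto simp: sum_roots_def)

lemma pair_roots_disjoint_ev: "(diff_roots n \<union> sum_roots n) \<inter> ev ` S = {}"
proof -
  have "ev k \<noteq> vadd (ev i) (ev j)" if "i < j" for i j k
  proof
    assume "ev k = vadd (ev i) (ev j)"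
    then have "vadd (ev i) (ev j) i = ev k i" "vadd (ev i) (ev j) j = ev k j"
      by simp_all
    with that show False
      by (auto split: if_splits)
  qed
  then have "sum_roots n \<inter> ev ` S = {}"
    by (auto simp: sum_roots_def)
  moreover have "ev ` S \<subseteq> {x. \<forall>k. 0 \<le> x k}"
    by auto
  ultimately show ?thesis
    using diff_roots_disjoint_nonneg[of n] by blast
qed

lemma pair_roots_disjoint_scaled_ev: "(diff_roots n \<union> sum_roots n) \<inter> (\<lambda>k. vscale 2 (ev k)) ` S = {}"
proof -
  have "vscale 2 (ev k) \<noteq> vadd (ev i) (ev j)" if "i < j" for i j k
  proof
    assume "vscale 2 (ev k) = vadd (ev i) (ev j)"
    then have "vadd (ev i) (ev j) i = vscale 2 (ev k) i"
      by simp
    with that show False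
      by (auto split: if_splits)
  qed
  then have "sum_roots n \<inter> (\<lambda>k. vscale 2 (ev k)) ` S = {}"
    by (auto simp: sum_roots_def)
  moreover have "(\<lambda>k. vscale 2 (ev k)) ` S \<subseteq> {x. \<forall>k. 0 \<le> x k}"
    by auto
  ultimately show ?thesis
    using diff_roots_disjoint_nonneg[of n] by blast
qed

context comm_monoid_set
begin

lemma over_diff_roots:
  "F g (diff_roots n) = F (\<lambda>j. F (\<lambda>i. g (vsub (ev i) (ev j))) {..<j}) {..<n}"
  unfolding diff_roots_eq_image reindex[OF inj_on_diff_root]
  by (simp add: Sigma comp_def case_prod_unfold)

lemma over_sum_roots:
  "F g (sum_roots n) = F (\<lambda>j. F (\<lambda>i. g (vadd (ev i) (ev j))) {..<j}) {..<n}"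
  unfolding sum_roots_eq_image reindex[OF inj_on_sum_root]
  by (simp add: Sigma comp_def case_prod_unfold)

lemma over_pair_roots:
  "F g (diff_roots n \<union> sum_roots n)
     = F (\<lambda>j. F (\<lambda>i. g (vsub (ev i) (ev j)) \<^bold>* g (vadd (ev i) (ev j))) {..<j}) {..<n}"
proof -
  have "diff_roots n \<inter> sum_roots n = {}"
    using diff_roots_disjoint_nonneg sum_roots_nonneg by blast
  then show ?thesis
    by (simp add: union_disjoint finite_diff_roots finite_sum_roots over_diff_roots
        over_sum_roots distrib)
qed

lemma over_pair_and_axis_roots:
  assumes "inj w" "(diff_roots n \<union> sum_roots n) \<inter> w ` {..<n} = {}"
  shows "F g (diff_roots n \<union> sum_roots n \<union> w ` {..<n})
     = F (\<lambda>j. F (\<lambda>i. g (vsub (ev i) (ev j)) \<^bold>* g (vadd (ev i) (ev j))) {..<j}) {..<n}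
       \<^bold>* F (\<lambda>i. g (w i)) {..<n}"
  using assms(2)
  by (simp add: union_disjoint finite_diff_roots finite_sum_roots over_pair_roots
      reindex[OF inj_on_subset[OF assms(1)]])

end

lemma sum_lessThan_indicator_greater:
  "(\<Sum>j<n. if k < j then 1 else 0 :: real) = real (n - Suc k)"
  by (induction n) (auto simp: Suc_diff_le)

lemma rho_A: "k \<le> n \<Longrightarrow> rho (A n) k = real n / 2 - real k"
  unfolding rho_def posroots_A
  by (simp add: sum.over_diff_roots sum_subtractf sum_lessThan_indicator_greater
      if_distrib[of "(*) _"] cong: if_cong)

lemma sum_pair_roots: "(\<Sum>\<mu>\<in>diff_roots n \<union> sum_roots n. \<mu> k) = 2 * real (n - Suc k)"
  by (simp add: sum.over_pair_roots sum_distrib_left[symmetric] sum_lessThan_indicator_greater)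

lemma rho_B: "k < n \<Longrightarrow> rho (B n) k = real n - 1 / 2 - real k"
  unfolding rho_def posroots_B
  using pair_roots_disjoint_ev[of n "{..<n}"]
  by (simp add: sum.union_disjoint finite_diff_roots finite_sum_roots sum_pair_roots
      sum.reindex[OF inj_on_subset[OF inj_ev]])

lemma rho_C: "k < n \<Longrightarrow> rho (C n) k = real n - real k"
  unfolding rho_def posroots_C
  using pair_roots_disjoint_scaled_ev[of n "{..<n}"]
  by (simp add: sum.union_disjoint finite_diff_roots finite_sum_roots sum_pair_roots
      sum.reindex[OF inj_on_subset[OF inj_scaled_ev]] sum_distrib_left[symmetric])

lemma rho_D: "k < n \<Longrightarrow> rho (D n) k = real n - 1 - real k"
  unfolding rho_def posroots_D by (simp add: sum_pair_roots)

lemma minform_A: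
  assumes "1 \<le> n" "i \<le> n" "j \<le> n"
  shows "minform (A n) (vsub (ev i) (ev j)) x = x i - x j"
proof -
  have "eucl (A n) (max_root (A n)) (max_root (A n)) = 2"
    using assms(1) by (simp add: eucl_vsub eucl_ev)
  with assms(2,3) show ?thesis
    by (simp add: minform_eq_eucl eucl_vsub eucl_ev)
qed

lemma adjoint_product_A:
  assumes n: "1 \<le> n"
    and nz: "\<forall>\<mu>\<in>posroots (A n). \<phi> (minform (A n) \<mu> (rho (A n))) \<noteq> 0"
  shows "adjoint_product (A n) \<phi> = \<phi> (real n + 2) / \<phi> 1 * (\<phi> (real n) / \<phi> 1)"
proof -
  \<comment> \<open>\<open>(e\<^sub>i - e\<^sub>j, \<lambda>\<^sub>a\<^sub>d) = [i = 0] + [j = n]\<close> and \<open>(e\<^sub>i - e\<^sub>j, \<rho>) = j - i\<close>\<close>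
  define G where "G i j = \<phi> (real j - real i + (if i = 0 then 1 else 0) + (if j = n then 1 else 0))
    / \<phi> (real j - real i)" for i j :: nat
  have nz_diff: "\<phi> (real j - real i) \<noteq> 0" if "i < j" "j \<le> n" for i j
    using nz[rule_format, of "vsub (ev i) (ev j)"] that n
    by (auto simp: posroots_A diff_roots_def minform_A rho_A)
  have nz_1: "\<phi> 1 \<noteq> 0" and nz_n: "\<phi> (real n) \<noteq> 0"
    using nz_diff[of 0 1] nz_diff[of 0 n] n by simp_all
  have first_row: "(\<Prod>j\<in>{1..<n}. G 0 j) = \<phi> (real n) / \<phi> 1"
  proof -
    have "(\<Prod>j\<in>{1..<n}. G 0 j) = (\<Prod>j\<in>{1..<n}. \<phi> (real (Suc j)) / \<phi> (real j))"
      by (rule prod.cong) (auto simp: G_def algebra_simps)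
    then show ?thesis
      using n nz_diff[of 0] nz_1 prod_telescope_mult[of 1 n "\<lambda>j. \<phi> (real j)"]
      by (simp add: eq_divide_eq)
  qed
  have last_column: "(\<Prod>i\<in>{1..<n}. G i n) = \<phi> (real n) / \<phi> 1"
  proof -
    have "(\<Prod>i\<in>{1..<n}. G i n)
        = (\<Prod>i\<in>{1..<n}. \<phi> (real n + 1 - real i) / \<phi> (real n + 1 - real (Suc i)))"
      by (rule prod.cong) (auto simp: G_def algebra_simps)
    then show ?thesis
      using n nz_diff[of _ n] nz_1 prod_telescope_mult'[of 1 n "\<lambda>i. \<phi> (real n + 1 - real i)"]
      by (simp add: eq_divide_eq)
  qed
  have "adjoint_product (A n) \<phi> = (\<Prod>j<n. \<Prod>i<j. G i j) * (\<Prod>i<n. G i n)"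
    unfolding adjoint_product_def posroots_A prod.over_diff_roots prod.lessThan_Suc
    by (intro arg_cong2[where f = "(*)"] prod.cong refl) (simp_all add: minform_A n rho_A G_def algebra_simps)
  also have "(\<Prod>j<n. \<Prod>i<j. G i j) = (\<Prod>j\<in>{1..<n}. G 0 j)"
    by (rule prod_triangle_one_row) (use nz_diff in \<open>auto simp: G_def\<close>)
  also have "(\<Prod>i<n. G i n) = G 0 n * (\<Prod>i\<in>{1..<n}. G i n)"
    using n by (simp add: lessThan_atLeast0 prod.atLeast_Suc_lessThan)
  also have "G 0 n = \<phi> (real n + 2) / \<phi> (real n)"
    using n by (simp add: G_def algebra_simps)
  finally show ?thesis
    unfolding first_row last_column using nz_n by simp
qed

text \<open>
  The roots \<open>e\<^sub>i \<plusminus> e\<^sub>j\<close> of \<open>B\<^sub>n\<close> (\<open>r = n - 1/2\<close>) and \<open>D\<^sub>n\<close> (\<open>r = n - 1\<close>): the highest root is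
  \<open>e\<^sub>0 + e\<^sub>1\<close>, and \<open>(e\<^sub>i - e\<^sub>j, \<rho>) = j - i\<close>, \<open>(e\<^sub>i + e\<^sub>j, \<rho>) = 2r - i - j\<close>.
\<close>

lemma prod_diff_root_factors:
  fixes \<phi> :: "real \<Rightarrow> real"
  defines "\<theta> \<equiv> vadd (ev 0) (ev 1)"
  assumes n: "2 \<le> n" and nz_diff: "\<And>i j. i < j \<Longrightarrow> j < n \<Longrightarrow> \<phi> (real j - real i) \<noteq> 0"
    and nz_2: "\<phi> 2 \<noteq> 0"
  shows "(\<Prod>j<n. \<Prod>i<j. \<phi> (real j - real i + \<theta> i - \<theta> j) / \<phi> (real j - real i))
       = \<phi> (real n) / \<phi> 2 * (\<phi> (real n - 1) / \<phi> 1)"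
proof -
  define Df where "Df i j = \<phi> (real j - real i + \<theta> i - \<theta> j) / \<phi> (real j - real i)" for i j
  have nz_1: "\<phi> 1 \<noteq> 0"
    using nz_diff[of 0 1] n by simp
  have first_row: "(\<Prod>j\<in>{2..<n}. Df 0 j) = \<phi> (real n) / \<phi> 2"
  proof -
    have "(\<Prod>j\<in>{2..<n}. Df 0 j) = (\<Prod>j\<in>{2..<n}. \<phi> (real (Suc j)) / \<phi> (real j))"
      by (rule prod.cong) (auto simp: Df_def \<theta>_def algebra_simps)
    then show ?thesis
      using n nz_diff[of 0] nz_2 prod_telescope_mult[of 2 n "\<lambda>j. \<phi> (real j)"]
      by (simp add: eq_divide_eq)
  qed
  have second_row: "(\<Prod>j\<in>{2..<n}. Df 1 j) = \<phi> (real n - 1) / \<phi> 1"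
  proof -
    have "(\<Prod>j\<in>{2..<n}. Df 1 j) = (\<Prod>j\<in>{2..<n}. \<phi> (real (Suc j) - 1) / \<phi> (real j - 1))"
      by (rule prod.cong) (auto simp: Df_def \<theta>_def algebra_simps)
    then show ?thesis
      using n nz_diff[of 1] nz_1 prod_telescope_mult[of 2 n "\<lambda>j. \<phi> (real j - 1)"]
      by (simp add: eq_divide_eq)
  qed
  have corner: "Df 0 1 = 1"
    using nz_1 by (simp add: Df_def \<theta>_def)
  have "(\<Prod>j<n. \<Prod>i<j. Df i j) = Df 0 1 * (\<Prod>j\<in>{2..<n}. Df 0 j * Df 1 j)"
    by (rule prod_triangle_two_rows) (use n nz_diff in \<open>auto simp: Df_def \<theta>_def\<close>)
  also have "\<dots> = (\<Prod>j\<in>{2..<n}. Df 0 j) * (\<Prod>j\<in>{2..<n}. Df 1 j)"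
    unfolding corner prod.distrib by simp
  also have "\<dots> = \<phi> (real n) / \<phi> 2 * (\<phi> (real n - 1) / \<phi> 1)"
    unfolding first_row second_row ..
  finally show ?thesis
    by (simp only: Df_def)
qed

lemma prod_sum_root_factors:
  fixes \<phi> :: "real \<Rightarrow> real" and r :: real
  defines "\<theta> \<equiv> vadd (ev 0) (ev 1)"
  assumes n: "2 \<le> n"
    and nz_sum: "\<And>i j. i < j \<Longrightarrow> j < n \<Longrightarrow> \<phi> (2 * r - real i - real j) \<noteq> 0"
    and nz_last: "\<phi> (2 * r - real n) \<noteq> 0"
  shows "(\<Prod>j<n. \<Prod>i<j. \<phi> (2 * r - real i - real j + \<theta> i + \<theta> j) / \<phi> (2 * r - real i - real j))
       = \<phi> (2 * r + 1) / \<phi> (2 * r + 1 - real n) * (\<phi> (2 * r - 2) / \<phi> (2 * r - real n))"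
proof -
  define Sf where "Sf i j = \<phi> (2 * r - real i - real j + \<theta> i + \<theta> j) / \<phi> (2 * r - real i - real j)"
    for i j
  have nz_pair: "\<phi> (2 * r - 1) \<noteq> 0"
    using nz_sum[of 0 1] n by simp
  have nz_corner: "\<phi> (2 * r + 1 - real n) \<noteq> 0"
    using nz_sum[of 0 "n - 1"] n by (simp add: of_nat_diff algebra_simps)
  have first_row: "(\<Prod>j\<in>{2..<n}. Sf 0 j) = \<phi> (2 * r - 1) / \<phi> (2 * r + 1 - real n)"
  proof -
    have "(\<Prod>j\<in>{2..<n}. Sf 0 j)
        = (\<Prod>j\<in>{2..<n}. \<phi> (2 * r + 1 - real j) / \<phi> (2 * r + 1 - real (Suc j)))"
      by (rule prod.cong) (auto simp: Sf_def \<theta>_def algebra_simps)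
    then show ?thesis
      using n nz_sum[of 0] nz_corner prod_telescope_mult'[of 2 n "\<lambda>j. \<phi> (2 * r + 1 - real j)"]
      by (simp add: eq_divide_eq algebra_simps)
  qed
  have second_row: "(\<Prod>j\<in>{2..<n}. Sf 1 j) = \<phi> (2 * r - 2) / \<phi> (2 * r - real n)"
  proof -
    have "(\<Prod>j\<in>{2..<n}. Sf 1 j)
        = (\<Prod>j\<in>{2..<n}. \<phi> (2 * r - real j) / \<phi> (2 * r - real (Suc j)))"
      by (rule prod.cong) (auto simp: Sf_def \<theta>_def algebra_simps)
    then show ?thesis
      using n nz_sum[of 1] nz_last prod_telescope_mult'[of 2 n "\<lambda>j. \<phi> (2 * r - real j)"]
      by (simp add: eq_divide_eq algebra_simps)
  qed
  have corner: "Sf 0 1 = \<phi> (2 * r + 1) / \<phi> (2 * r - 1)"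
    by (simp add: Sf_def \<theta>_def algebra_simps)
  have "(\<Prod>j<n. \<Prod>i<j. Sf i j) = Sf 0 1 * (\<Prod>j\<in>{2..<n}. Sf 0 j * Sf 1 j)"
    by (rule prod_triangle_two_rows) (use n nz_sum in \<open>auto simp: Sf_def \<theta>_def\<close>)
  also have "\<dots> = \<phi> (2 * r + 1) / \<phi> (2 * r - 1) * ((\<Prod>j\<in>{2..<n}. Sf 0 j) * (\<Prod>j\<in>{2..<n}. Sf 1 j))"
    unfolding corner prod.distrib by simp
  also have "\<dots> = \<phi> (2 * r + 1) / \<phi> (2 * r + 1 - real n) * (\<phi> (2 * r - 2) / \<phi> (2 * r - real n))"
    unfolding first_row second_row using nz_pair by simp
  finally show ?thesis
    by (simp only: Sf_def)
qed

lemma minform_B: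
  assumes "2 \<le> n" "i < n" "j < n"
  shows "minform (B n) (vsub (ev i) (ev j)) x = x i - x j"
    and "minform (B n) (vadd (ev i) (ev j)) x = x i + x j"
    and "minform (B n) (ev i) x = x i"
proof -
  have "eucl (B n) (max_root (B n)) (max_root (B n)) = 2"
    using assms(1) by (simp add: eucl_vadd eucl_ev)
  with assms(2,3) show "minform (B n) (vsub (ev i) (ev j)) x = x i - x j"
    and "minform (B n) (vadd (ev i) (ev j)) x = x i + x j" and "minform (B n) (ev i) x = x i"
    by (simp_all add: minform_eq_eucl eucl_vsub eucl_vadd eucl_ev)
qed

lemma adjoint_product_B:
  assumes n: "2 \<le> n"
    and nz: "\<forall>\<mu>\<in>posroots (B n). \<phi> (minform (B n) \<mu> (rho (B n))) \<noteq> 0"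
    and nz_2: "\<phi> 2 \<noteq> 0"
  shows "adjoint_product (B n) \<phi>
    = \<phi> (2 * real n) / \<phi> 1 * (\<phi> (2 * real n - 3) / \<phi> 2) * (\<phi> (real n + 1 / 2) / \<phi> (real n - 3 / 2))"
proof -
  define r where "r = real n - 1 / 2"
  define \<theta> where "\<theta> = vadd (ev 0) (ev 1)"
  have nz_diff: "\<phi> (real j - real i) \<noteq> 0" if "i < j" "j < n" for i j
  proof -
    have "vsub (ev i) (ev j) \<in> posroots (B n)"
      using that by (auto simp: posroots_B diff_roots_def)
    from nz[rule_format, OF this] that n show ?thesis
      by (simp add: minform_B rho_B)
  qed
  have nz_sum: "\<phi> (2 * r - real i - real j) \<noteq> 0" if "i < j" "j < n" for i j
  proof -
    have "vadd (ev i) (ev j) \<in> posroots (B n)"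
      using that by (auto simp: posroots_B sum_roots_def)
    from nz[rule_format, OF this] that n show ?thesis
      by (simp add: minform_B rho_B r_def algebra_simps)
  qed
  have nz_short: "\<phi> (r - real i) \<noteq> 0" if "i < n" for i
  proof -
    have "ev i \<in> posroots (B n)"
      using that by (auto simp: posroots_B)
    from nz[rule_format, OF this] that n show ?thesis
      by (simp add: minform_B rho_B r_def)
  qed
  have nz_last: "\<phi> (real n - 1) \<noteq> 0" and nz_corner: "\<phi> (real n) \<noteq> 0"
    using nz_diff[of 0 "n - 1"] nz_sum[of 0 "n - 1"] n by (simp_all add: r_def of_nat_diff)
  have diff_part: "(\<Prod>j<n. \<Prod>i<j. \<phi> (real j - real i + \<theta> i - \<theta> j) / \<phi> (real j - real i))
      = \<phi> (real n) / \<phi> 2 * (\<phi> (real n - 1) / \<phi> 1)"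
    unfolding \<theta>_def using n nz_diff nz_2 by (rule prod_diff_root_factors)
  have sum_part: "(\<Prod>j<n. \<Prod>i<j. \<phi> (2 * r - real i - real j + \<theta> i + \<theta> j) / \<phi> (2 * r - real i - real j))
      = \<phi> (2 * r + 1) / \<phi> (2 * r + 1 - real n) * (\<phi> (2 * r - 2) / \<phi> (2 * r - real n))"
  proof -
    have "2 * r - real n = real n - 1"
      by (simp add: r_def)
    then show ?thesis
      unfolding \<theta>_def using n nz_sum nz_last by (intro prod_sum_root_factors) simp_all
  qed
  have short_part: "(\<Prod>i<n. \<phi> (r - real i + \<theta> i) / \<phi> (r - real i)) = \<phi> (r + 1) / \<phi> (r - 1)"
    using n nz_short nz_short[of 0]
      prod_lessThan_eq_prefix[of 2 n "\<lambda>i. \<phi> (r - real i + \<theta> i) / \<phi> (r - real i)"]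
    by (simp add: \<theta>_def numeral_2_eq_2)
  have factors: "adjoint_product (B n) \<phi>
      = (\<Prod>j<n. \<Prod>i<j. \<phi> (real j - real i + \<theta> i - \<theta> j) / \<phi> (real j - real i))
        * (\<Prod>j<n. \<Prod>i<j. \<phi> (2 * r - real i - real j + \<theta> i + \<theta> j) / \<phi> (2 * r - real i - real j))
        * (\<Prod>i<n. \<phi> (r - real i + \<theta> i) / \<phi> (r - real i))"
    unfolding adjoint_product_def posroots_B
      prod.over_pair_and_axis_roots[OF inj_ev pair_roots_disjoint_ev] prod.distrib
    using n by (intro arg_cong2[where f = "(*)"] prod.cong refl)
      (simp_all add: minform_B rho_B r_def \<theta>_def algebra_simps)
  have r: "2 * r + 1 = 2 * real n" "2 * r + 1 - real n = real n" "2 * r - 2 = 2 * real n - 3"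
    "2 * r - real n = real n - 1" "r + 1 = real n + 1 / 2" "r - 1 = real n - 3 / 2"
    by (simp_all add: r_def)
  show ?thesis
    unfolding factors diff_part sum_part short_part r using nz_last nz_corner
    by (simp add: field_simps)
qed

lemma minform_C:
  assumes "i < n" "j < n"
  shows "minform (C n) (vsub (ev i) (ev j)) x = (x i - x j) / 2"
    and "minform (C n) (vadd (ev i) (ev j)) x = (x i + x j) / 2"
    and "minform (C n) (vscale 2 (ev i)) x = x i"
proof -
  have "eucl (C n) (max_root (C n)) (max_root (C n)) = 4"
    using assms by (simp add: eucl_vscale eucl_ev)
  with assms show "minform (C n) (vsub (ev i) (ev j)) x = (x i - x j) / 2"
    and "minform (C n) (vadd (ev i) (ev j)) x = (x i + x j) / 2"
    and "minform (C n) (vscale 2 (ev i)) x = x i"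
    by (simp_all add: minform_def eucl_vsub eucl_vadd eucl_vscale eucl_ev)
qed

lemma adjoint_product_C:
  assumes n: "3 \<le> n"
    and nz: "\<forall>\<mu>\<in>posroots (C n). \<phi> (minform (C n) \<mu> (rho (C n))) \<noteq> 0"
    and nz_\<beta>: "\<phi> (1 / 2) \<noteq> 0" and nz_\<gamma>: "\<phi> ((real n + 2) / 2) \<noteq> 0"
  shows "adjoint_product (C n) \<phi>
    = \<phi> (real n + 2) / \<phi> 1 * (\<phi> (real n + 1 / 2) / \<phi> (1 / 2)) * (\<phi> (real n / 2) / \<phi> ((real n + 2) / 2))"
proof -
  define \<theta> where "\<theta> = vscale 2 (ev 0)"
  define Df where "Df i j = \<phi> ((real j - real i + \<theta> i - \<theta> j) / 2) / \<phi> ((real j - real i) / 2)"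
    for i j
  define Sf where "Sf i j = \<phi> ((2 * real n - real i - real j + \<theta> i + \<theta> j) / 2)
    / \<phi> ((2 * real n - real i - real j) / 2)" for i j
  have nz_diff: "\<phi> ((real j - real i) / 2) \<noteq> 0" if "i < j" "j < n" for i j
  proof -
    have "vsub (ev i) (ev j) \<in> posroots (C n)"
      using that by (auto simp: posroots_C diff_roots_def)
    from nz[rule_format, OF this] that show ?thesis
      by (simp add: minform_C rho_C)
  qed
  have nz_sum: "\<phi> ((2 * real n - real i - real j) / 2) \<noteq> 0" if "i < j" "j < n" for i j
  proof -
    have "vadd (ev i) (ev j) \<in> posroots (C n)"
      using that by (auto simp: posroots_C sum_roots_def)
    from nz[rule_format, OF this] that show ?thesis
      by (simp add: minform_C rho_C algebra_simps)
  qed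
  have nz_long: "\<phi> (real n - real i) \<noteq> 0" if "i < n" for i
  proof -
    have "vscale 2 (ev i) \<in> posroots (C n)"
      using that by (auto simp: posroots_C)
    from nz[rule_format, OF this] that show ?thesis
      by (simp add: minform_C rho_C)
  qed
  have nz_1: "\<phi> 1 \<noteq> 0" and nz_mid: "\<phi> ((real n + 1) / 2) \<noteq> 0" and nz_n: "\<phi> (real n) \<noteq> 0"
    using nz_diff[of 0 2] nz_sum[of 0 "n - 1"] nz_long[of 0] n
    by (simp_all add: of_nat_diff algebra_simps)
  have diff_row: "(\<Prod>j\<in>{1..<n}. Df 0 j) = \<phi> (real n / 2) * \<phi> ((real n + 1) / 2) / (\<phi> (1 / 2) * \<phi> 1)"
  proof -
    have "(\<Prod>j\<in>{1..<n}. Df 0 j) = (\<Prod>j\<in>{1..<n}. \<phi> (real (j + 2) / 2) / \<phi> (real j / 2))"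
      by (rule prod.cong) (auto simp: Df_def \<theta>_def add.commute)
    then show ?thesis
      using n nz_diff[of 0] nz_\<beta> nz_1 prod_telescope2_mult[of 1 n "\<lambda>j. \<phi> (real j / 2)"]
      by (simp add: eq_divide_eq add.commute)
  qed
  have sum_row: "(\<Prod>j\<in>{1..<n}. Sf 0 j)
      = \<phi> ((2 * real n + 1) / 2) * \<phi> (real n) / (\<phi> ((real n + 2) / 2) * \<phi> ((real n + 1) / 2))"
  proof -
    have "(\<Prod>j\<in>{1..<n}. Sf 0 j)
        = (\<Prod>j\<in>{1..<n}. \<phi> ((2 * real n + 2 - real j) / 2) / \<phi> ((2 * real n + 2 - real (j + 2)) / 2))"
      by (rule prod.cong) (auto simp: Sf_def \<theta>_def algebra_simps)
    then show ?thesis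
      using n nz_sum[of 0] nz_\<gamma> nz_mid
        prod_telescope2_mult'[of 1 n "\<lambda>j. \<phi> ((2 * real n + 2 - real j) / 2)"]
      by (simp add: eq_divide_eq algebra_simps)
  qed
  have long_part: "(\<Prod>i<n. \<phi> (real n - real i + \<theta> i) / \<phi> (real n - real i)) = \<phi> (real n + 2) / \<phi> (real n)"
    using n nz_long prod_lessThan_eq_prefix[of 1 n "\<lambda>i. \<phi> (real n - real i + \<theta> i) / \<phi> (real n - real i)"]
    by (simp add: \<theta>_def)
  have "adjoint_product (C n) \<phi> = (\<Prod>j<n. \<Prod>i<j. Df i j) * (\<Prod>j<n. \<Prod>i<j. Sf i j)
      * (\<Prod>i<n. \<phi> (real n - real i + \<theta> i) / \<phi> (real n - real i))"
    unfolding adjoint_product_def posroots_C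
      prod.over_pair_and_axis_roots[OF inj_scaled_ev pair_roots_disjoint_scaled_ev] prod.distrib
    by (intro arg_cong2[where f = "(*)"] prod.cong refl)
      (simp_all add: minform_C rho_C Df_def Sf_def \<theta>_def algebra_simps)
  also have "(\<Prod>j<n. \<Prod>i<j. Df i j) = (\<Prod>j\<in>{1..<n}. Df 0 j)"
    by (rule prod_triangle_one_row) (use nz_diff in \<open>auto simp: Df_def \<theta>_def\<close>)
  also have "(\<Prod>j<n. \<Prod>i<j. Sf i j) = (\<Prod>j\<in>{1..<n}. Sf 0 j)"
    by (rule prod_triangle_one_row) (use nz_sum in \<open>auto simp: Sf_def \<theta>_def\<close>)
  finally show ?thesis
    unfolding diff_row sum_row long_part using nz_1 nz_\<beta> nz_\<gamma> nz_mid nz_n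
    by (simp add: field_simps)
qed

lemma minform_D:
  assumes "2 \<le> n" "i < n" "j < n"
  shows "minform (D n) (vsub (ev i) (ev j)) x = x i - x j"
    and "minform (D n) (vadd (ev i) (ev j)) x = x i + x j"
proof -
  have "eucl (D n) (max_root (D n)) (max_root (D n)) = 2"
    using assms(1) by (simp add: eucl_vadd eucl_ev)
  with assms(2,3) show "minform (D n) (vsub (ev i) (ev j)) x = x i - x j"
    and "minform (D n) (vadd (ev i) (ev j)) x = x i + x j"
    by (simp_all add: minform_eq_eucl eucl_vsub eucl_vadd eucl_ev)
qed

lemma adjoint_product_D:
  assumes n: "2 \<le> n"
    and nz: "\<forall>\<mu>\<in>posroots (D n). \<phi> (minform (D n) \<mu> (rho (D n))) \<noteq> 0"
    and nz_2: "\<phi> 2 \<noteq> 0" and nz_\<gamma>: "\<phi> (real n - 2) \<noteq> 0"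
  shows "adjoint_product (D n) \<phi>
    = \<phi> (2 * real n - 1) / \<phi> 1 * (\<phi> (2 * real n - 4) / \<phi> 2) * (\<phi> (real n) / \<phi> (real n - 2))"
proof -
  define r where "r = real n - 1"
  define \<theta> where "\<theta> = vadd (ev 0) (ev 1)"
  have nz_diff: "\<phi> (real j - real i) \<noteq> 0" if "i < j" "j < n" for i j
    using nz[rule_format, of "vsub (ev i) (ev j)"] that n
    by (auto simp: posroots_D diff_roots_def minform_D rho_D)
  have nz_sum: "\<phi> (2 * r - real i - real j) \<noteq> 0" if "i < j" "j < n" for i j
    using nz[rule_format, of "vadd (ev i) (ev j)"] that n
    by (auto simp: posroots_D sum_roots_def minform_D rho_D r_def algebra_simps)
  have nz_last: "\<phi> (real n - 1) \<noteq> 0"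
    using nz_diff[of 0 "n - 1"] n by (simp add: of_nat_diff)
  have diff_part: "(\<Prod>j<n. \<Prod>i<j. \<phi> (real j - real i + \<theta> i - \<theta> j) / \<phi> (real j - real i))
      = \<phi> (real n) / \<phi> 2 * (\<phi> (real n - 1) / \<phi> 1)"
    unfolding \<theta>_def using n nz_diff nz_2 by (rule prod_diff_root_factors)
  have sum_part: "(\<Prod>j<n. \<Prod>i<j. \<phi> (2 * r - real i - real j + \<theta> i + \<theta> j) / \<phi> (2 * r - real i - real j))
      = \<phi> (2 * r + 1) / \<phi> (2 * r + 1 - real n) * (\<phi> (2 * r - 2) / \<phi> (2 * r - real n))"
  proof -
    have "2 * r - real n = real n - 2"
      by (simp add: r_def)
    then show ?thesis
      unfolding \<theta>_def using n nz_sum nz_\<gamma> by (intro prod_sum_root_factors) simp_all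
  qed
  have "adjoint_product (D n) \<phi>
      = (\<Prod>j<n. \<Prod>i<j. \<phi> (real j - real i + \<theta> i - \<theta> j) / \<phi> (real j - real i))
        * (\<Prod>j<n. \<Prod>i<j. \<phi> (2 * r - real i - real j + \<theta> i + \<theta> j) / \<phi> (2 * r - real i - real j))"
    unfolding adjoint_product_def posroots_D prod.over_pair_roots prod.distrib
    using n by (intro arg_cong2[where f = "(*)"] prod.cong refl)
      (simp_all add: minform_D rho_D r_def \<theta>_def algebra_simps)
  then show ?thesis
    unfolding diff_part sum_part using nz_last
    by (simp add: r_def field_simps)
qed

section \<open>The exceptional root systems\<close>

lemma adjoint_product_eq_of_mset_eq:
  assumes L: "posroots T = set L" "distinct L"
    and nz: "\<forall>\<mu>\<in>posroots T. \<phi> (minform T \<mu> (rho T)) \<noteq> 0"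
    and abc: "{a, b, c} \<subseteq> set (map (\<lambda>\<mu>. minform T \<mu> (rho T)) L)"
    and eq: "mset (map (\<lambda>\<mu>. minform T \<mu> (vadd (max_root T) (rho T))) L) + {#a, b, c#}
           = mset (map (\<lambda>\<mu>. minform T \<mu> (rho T)) L) + {#a', b', c'#}"
  shows "adjoint_product T \<phi> = \<phi> a' / \<phi> a * (\<phi> b' / \<phi> b) * (\<phi> c' / \<phi> c)"
proof -
  define num where "num = prod_list (map (\<lambda>\<mu>. \<phi> (minform T \<mu> (vadd (max_root T) (rho T)))) L)"
  define den where "den = prod_list (map (\<lambda>\<mu>. \<phi> (minform T \<mu> (rho T))) L)"
  have "num * (\<phi> a * \<phi> b * \<phi> c) = den * (\<phi> a' * \<phi> b' * \<phi> c')"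
    using arg_cong[OF eq, of "\<lambda>M. prod_mset (image_mset \<phi> M)"]
    by (simp add: num_def den_def prod_mset_prod_list[symmetric] mset_map
        image_mset.compositionality comp_def mult_ac)
  moreover have "den \<noteq> 0" "\<phi> a * \<phi> b * \<phi> c \<noteq> 0"
    using nz abc by (auto simp: den_def L prod_list_zero_iff)
  ultimately have "num / den = \<phi> a' * \<phi> b' * \<phi> c' / (\<phi> a * \<phi> b * \<phi> c)"
    by (simp add: frac_eq_eq mult_ac)
  moreover have "adjoint_product T \<phi> = num / den"
    by (simp add: adjoint_product_def prod_dividef L prod.distinct_set_conv_list num_def den_def)
  ultimately show ?thesis
    by (simp add: times_divide_times_eq)
qed

lemma rho_eq_sum_list:
  "posroots T = set L \<Longrightarrow> distinct L \<Longrightarrow> rho T k = sum_list (map (\<lambda>\<mu>. \<mu> k) L) / 2"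
  by (simp add: rho_def sum_list_distinct_conv_sum_set)

lemma eucl_eq_sum_list: "eucl T x y = sum_list (map (\<lambda>k. x k * y k) [0..<amb_dim T])"
  by (simp add: eucl_def sum_list_sum_nth atLeast0LessThan)

lemma nth_of_map_upt_eq: "map f [0..<n] = xs \<Longrightarrow> k < n \<Longrightarrow> f k = xs ! k"
  by auto

lemma set_pairs_upt: "set [f i j. j \<leftarrow> [0..<m], i \<leftarrow> [0..<j]] = {f i j | i j. i < j \<and> j < m}"
  by fastforce

lemma set_subsets_filter:
  "set [g S. S \<leftarrow> map set (subseqs xs), P S] = {g S | S. S \<subseteq> set xs \<and> P S}"
proof -
  have "set [g S. S \<leftarrow> map set (subseqs xs), P S] = g ` {S \<in> set (map set (subseqs xs)). P S}"
    by auto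
  then show ?thesis
    by (auto simp only: set_map subseqs_powset Pow_iff)
qed

lemma set_subsets: "set [g S. S \<leftarrow> map set (subseqs xs)] = {g S | S. S \<subseteq> set xs}"
proof -
  have "set [g S. S \<leftarrow> map set (subseqs xs)] = g ` Pow (set xs)"
    by (simp only: set_map subseqs_powset)
  then show ?thesis
    by auto
qed

definition roots_G2 :: "vec list" where
  "roots_G2 = [vsub (ev 0) (ev 1), vadd (vscale (-2) (ev 0)) (vadd (ev 1) (ev 2)),
     vsub (ev 2) (ev 0), vsub (ev 2) (ev 1), vadd (vsub (ev 0) (vscale 2 (ev 1))) (ev 2),
     vsub (vscale 2 (ev 2)) (vadd (ev 0) (ev 1))]"

lemma posroots_G2: "posroots G2 = set roots_G2"
  by (simp add: roots_G2_def)

lemma distinct_roots_G2: "distinct roots_G2"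
proof -
  have "distinct (map (\<lambda>\<mu>. map \<mu> [0..<3]) roots_G2)"
    by (simp add: roots_G2_def upt_rec)
  then show ?thesis
    by (simp add: distinct_map)
qed

lemma rho_G2: "k < 3 \<Longrightarrow> rho G2 k = [-1, -2, 3] ! k"
proof (rule nth_of_map_upt_eq)
  show "map (rho G2) [0..<3] = [-1, -2, 3]"
    by (simp add: rho_eq_sum_list[OF posroots_G2 distinct_roots_G2] roots_G2_def
        upt_rec)
qed

lemma adjoint_product_G2:
  assumes "\<forall>\<mu>\<in>posroots G2. \<phi> (minform G2 \<mu> (rho G2)) \<noteq> 0"
  shows "adjoint_product G2 \<phi>
    = \<phi> 5 / \<phi> 1 * (\<phi> (7 / 3) / \<phi> (5 / 3)) * (\<phi> (8 / 3) / \<phi> (4 / 3))"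
proof -
  have num: "map (\<lambda>\<mu>. minform G2 \<mu> (vadd (max_root G2) (rho G2))) roots_G2
    = [1/3, 2, 7/3, 8/3, 3, 5]"
    by (simp add: minform_def eucl_eq_sum_list rho_G2 roots_G2_def upt_rec Let_def)
  have den: "map (\<lambda>\<mu>. minform G2 \<mu> (rho G2)) roots_G2
    = [1/3, 1, 4/3, 5/3, 2, 3]"
    by (simp add: minform_def eucl_eq_sum_list rho_G2 roots_G2_def upt_rec Let_def)
  show ?thesis
    by (rule adjoint_product_eq_of_mset_eq[OF posroots_G2 distinct_roots_G2 assms])
      (simp_all only: num den, simp_all add: add_mset_commute)
qed

definition roots_F4 :: "vec list" where
  "roots_F4 = [vsub (ev i) (ev j). j \<leftarrow> [0..<4], i \<leftarrow> [0..<j]]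
     @ [vadd (ev i) (ev j). j \<leftarrow> [0..<4], i \<leftarrow> [0..<j]]
     @ [ev i. i \<leftarrow> [0..<4]]
     @ [halfvec 4 S (\<lambda>_. 0). S \<leftarrow> map set (subseqs [1, 2, 3])]"

lemma posroots_F4: "posroots F4 = set roots_F4"
  unfolding roots_F4_def set_append set_pairs_upt set_subsets
  by auto

lemma distinct_roots_F4: "distinct roots_F4"
proof -
  have "distinct (map (\<lambda>\<mu>. map \<mu> [0..<4]) roots_F4)"
    by (simp add: roots_F4_def halfvec_def upt_rec Let_def)
  then show ?thesis
    by (simp add: distinct_map)
qed

lemma rho_F4: "k < 4 \<Longrightarrow> rho F4 k = [11/2, 5/2, 3/2, 1/2] ! k"
proof (rule nth_of_map_upt_eq)
  show "map (rho F4) [0..<4] = [11/2, 5/2, 3/2, 1/2]"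
    by (simp add: rho_eq_sum_list[OF posroots_F4 distinct_roots_F4] roots_F4_def halfvec_def
        upt_rec Let_def)
qed

lemma adjoint_product_F4:
  assumes "\<forall>\<mu>\<in>posroots F4. \<phi> (minform F4 \<mu> (rho F4)) \<noteq> 0"
  shows "adjoint_product F4 \<phi> = \<phi> 10 / \<phi> 1 * (\<phi> (13 / 2) / \<phi> (5 / 2)) * (\<phi> 6 / \<phi> 3)"
proof -
  have num: "map (\<lambda>\<mu>. minform F4 \<mu> (vadd (max_root F4) (rho F4))) roots_F4
    = [3, 5, 2, 6, 3, 1, 10, 8, 5, 7, 4, 2, 13/2, 7/2, 3/2, 1/2, 1/2, 1, 2, 5/2, 4, 9/2,
     11/2, 6]"
    by (simp add: minform_def eucl_eq_sum_list rho_F4 roots_F4_def halfvec_def upt_rec Let_def)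
  have den: "map (\<lambda>\<mu>. minform F4 \<mu> (rho F4)) roots_F4
    = [3, 4, 1, 5, 2, 1, 8, 7, 4, 6, 3, 2, 11/2, 5/2, 3/2, 1/2, 1/2, 1, 2, 5/2, 3, 7/2, 9/2,
     5]"
    by (simp add: minform_def eucl_eq_sum_list rho_F4 roots_F4_def halfvec_def upt_rec Let_def)
  show ?thesis
    by (rule adjoint_product_eq_of_mset_eq[OF posroots_F4 distinct_roots_F4 assms])
      (simp_all only: num den, simp_all add: add_mset_commute)
qed

definition roots_E6 :: "vec list" where
  "roots_E6 = [vsub (ev j) (ev i). j \<leftarrow> [0..<5], i \<leftarrow> [0..<j]]
     @ [vadd (ev i) (ev j). j \<leftarrow> [0..<5], i \<leftarrow> [0..<j]]
     @ [halfvec 5 S (\<lambda>k. if k = 5 \<or> k = 6 then -1/2 else if k = 7 then 1/2 else 0).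
          S \<leftarrow> map set (subseqs [0..<5]), even (card S)]"

lemma posroots_E6: "posroots E6 = set roots_E6"
  unfolding roots_E6_def set_append set_pairs_upt set_subsets_filter set_upt atLeast0LessThan
  by auto

lemma distinct_roots_E6: "distinct roots_E6"
proof -
  have "distinct (map (\<lambda>\<mu>. map \<mu> [0..<8]) roots_E6)"
    by (simp add: roots_E6_def halfvec_def upt_rec Let_def)
  then show ?thesis
    by (simp add: distinct_map)
qed

lemma rho_E6: "k < 8 \<Longrightarrow> rho E6 k = [0, 1, 2, 3, 4, -4, -4, 4] ! k"
proof (rule nth_of_map_upt_eq)
  show "map (rho E6) [0..<8] = [0, 1, 2, 3, 4, -4, -4, 4]"
    by (simp add: rho_eq_sum_list[OF posroots_E6 distinct_roots_E6] roots_E6_def halfvec_def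
        upt_rec Let_def)
qed

lemma adjoint_product_E6:
  assumes "\<forall>\<mu>\<in>posroots E6. \<phi> (minform E6 \<mu> (rho E6)) \<noteq> 0"
  shows "adjoint_product E6 \<phi> = \<phi> 13 / \<phi> 1 * (\<phi> 9 / \<phi> 3) * (\<phi> 8 / \<phi> 4)"
proof -
  have num: "map (\<lambda>\<mu>. minform E6 \<mu> (vadd (max_root E6) (rho E6))) roots_E6
    = [1, 2, 1, 3, 2, 1, 4, 3, 2, 1, 2, 3, 4, 4, 5, 6, 5, 6, 7, 8, 5, 4, 3, 11, 2, 10, 9, 8,
     1, 9, 8, 7, 7, 6, 5, 13]"
    by (simp add: minform_def eucl_eq_sum_list rho_E6 roots_E6_def halfvec_def upt_rec Let_def)
  have den: "map (\<lambda>\<mu>. minform E6 \<mu> (rho E6)) roots_E6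
    = [1, 2, 1, 3, 2, 1, 4, 3, 2, 1, 1, 2, 3, 3, 4, 5, 4, 5, 6, 7, 5, 4, 3, 10, 2, 9, 8, 7,
     1, 8, 7, 6, 6, 5, 4, 11]"
    by (simp add: minform_def eucl_eq_sum_list rho_E6 roots_E6_def halfvec_def upt_rec Let_def)
  show ?thesis
    by (rule adjoint_product_eq_of_mset_eq[OF posroots_E6 distinct_roots_E6 assms])
      (simp_all only: num den, simp_all add: add_mset_commute)
qed

definition roots_E7 :: "vec list" where
  "roots_E7 = [vsub (ev j) (ev i). j \<leftarrow> [0..<6], i \<leftarrow> [0..<j]]
     @ [vadd (ev i) (ev j). j \<leftarrow> [0..<6], i \<leftarrow> [0..<j]]
     @ [vsub (ev 7) (ev 6)]
     @ [halfvec 6 S (\<lambda>k. if k = 6 then -1/2 else if k = 7 then 1/2 else 0).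
          S \<leftarrow> map set (subseqs [0..<6]), odd (card S)]"

lemma posroots_E7: "posroots E7 = set roots_E7"
  unfolding roots_E7_def set_append set_pairs_upt set_subsets_filter set_upt atLeast0LessThan
  by auto

lemma distinct_roots_E7: "distinct roots_E7"
proof -
  have "distinct (map (\<lambda>\<mu>. map \<mu> [0..<8]) roots_E7)"
    by (simp add: roots_E7_def halfvec_def upt_rec Let_def)
  then show ?thesis
    by (simp add: distinct_map)
qed

lemma rho_E7: "k < 8 \<Longrightarrow> rho E7 k = [0, 1, 2, 3, 4, 5, -17/2, 17/2] ! k"
proof (rule nth_of_map_upt_eq)
  show "map (rho E7) [0..<8] = [0, 1, 2, 3, 4, 5, -17/2, 17/2]"
    by (simp add: rho_eq_sum_list[OF posroots_E7 distinct_roots_E7] roots_E7_def halfvec_def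
        upt_rec Let_def)
qed

lemma adjoint_product_E7:
  assumes "\<forall>\<mu>\<in>posroots E7. \<phi> (minform E7 \<mu> (rho E7)) \<noteq> 0"
  shows "adjoint_product E7 \<phi> = \<phi> 19 / \<phi> 1 * (\<phi> 14 / \<phi> 4) * (\<phi> 12 / \<phi> 6)"
proof -
  have num: "map (\<lambda>\<mu>. minform E7 \<mu> (vadd (max_root E7) (rho E7))) roots_E7
    = [1, 2, 1, 3, 2, 1, 4, 3, 2, 1, 5, 4, 3, 2, 1, 1, 2, 3, 3, 4, 5, 4, 5, 6, 7, 5, 6, 7, 8,
     9, 19, 7, 6, 5, 14, 4, 13, 12, 11, 3, 12, 11, 10, 10, 9, 8, 17, 2, 11, 10, 9, 9,
     8, 7, 16, 8, 7, 6, 15, 5, 14, 13, 12]"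
    by (simp add: minform_def eucl_eq_sum_list rho_E7 roots_E7_def halfvec_def upt_rec Let_def)
  have den: "map (\<lambda>\<mu>. minform E7 \<mu> (rho E7)) roots_E7
    = [1, 2, 1, 3, 2, 1, 4, 3, 2, 1, 5, 4, 3, 2, 1, 1, 2, 3, 3, 4, 5, 4, 5, 6, 7, 5, 6, 7, 8,
     9, 17, 6, 5, 4, 13, 3, 12, 11, 10, 2, 11, 10, 9, 9, 8, 7, 16, 1, 10, 9, 8, 8, 7,
     6, 15, 7, 6, 5, 14, 4, 13, 12, 11]"
    by (simp add: minform_def eucl_eq_sum_list rho_E7 roots_E7_def halfvec_def upt_rec Let_def)
  show ?thesis
    by (rule adjoint_product_eq_of_mset_eq[OF posroots_E7 distinct_roots_E7 assms])
      (simp_all only: num den, simp_all add: add_mset_commute)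
qed

definition roots_E8 :: "vec list" where
  "roots_E8 = [vsub (ev j) (ev i). j \<leftarrow> [0..<8], i \<leftarrow> [0..<j]]
     @ [vadd (ev i) (ev j). j \<leftarrow> [0..<8], i \<leftarrow> [0..<j]]
     @ [halfvec 7 S (\<lambda>k. if k = 7 then 1/2 else 0).
          S \<leftarrow> map set (subseqs [0..<7]), even (card S)]"

lemma posroots_E8: "posroots E8 = set roots_E8"
  unfolding roots_E8_def set_append set_pairs_upt set_subsets_filter set_upt atLeast0LessThan
  by auto

lemma distinct_roots_E8: "distinct roots_E8"
proof -
  have "distinct (map (\<lambda>\<mu>. map \<mu> [0..<8]) roots_E8)"
    by (simp add: roots_E8_def halfvec_def upt_rec Let_def)
  then show ?thesis
    by (simp add: distinct_map)
qed

lemma rho_E8: "k < 8 \<Longrightarrow> rho E8 k = [0, 1, 2, 3, 4, 5, 6, 23] ! k"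
proof (rule nth_of_map_upt_eq)
  show "map (rho E8) [0..<8] = [0, 1, 2, 3, 4, 5, 6, 23]"
    by (simp add: rho_eq_sum_list[OF posroots_E8 distinct_roots_E8] roots_E8_def halfvec_def
        upt_rec Let_def)
qed

lemma adjoint_product_E8:
  assumes "\<forall>\<mu>\<in>posroots E8. \<phi> (minform E8 \<mu> (rho E8)) \<noteq> 0"
  shows "adjoint_product E8 \<phi> = \<phi> 31 / \<phi> 1 * (\<phi> 24 / \<phi> 6) * (\<phi> 20 / \<phi> 10)"
proof -
  have num: "map (\<lambda>\<mu>. minform E8 \<mu> (vadd (max_root E8) (rho E8))) roots_E8
    = [1, 2, 1, 3, 2, 1, 4, 3, 2, 1, 5, 4, 3, 2, 1, 7, 6, 5, 4, 3, 2, 24, 23, 22, 21, 20, 19,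
     17, 1, 2, 3, 3, 4, 5, 4, 5, 6, 7, 5, 6, 7, 8, 9, 7, 8, 9, 10, 11, 12, 24, 25, 26,
     27, 28, 29, 31, 8, 6, 5, 17, 4, 16, 15, 13, 3, 15, 14, 12, 13, 11, 10, 22, 2, 14,
     13, 11, 12, 10, 9, 21, 11, 9, 8, 20, 7, 19, 18, 16, 1, 13, 12, 10, 11, 9, 8, 20,
     10, 8, 7, 19, 6, 18, 17, 15, 9, 7, 6, 18, 5, 17, 16, 14, 4, 16, 15, 13, 14, 12,
     11, 23]"
    by (simp add: minform_def eucl_eq_sum_list rho_E8 roots_E8_def halfvec_def upt_rec Let_def)
  have den: "map (\<lambda>\<mu>. minform E8 \<mu> (rho E8)) roots_E8
    = [1, 2, 1, 3, 2, 1, 4, 3, 2, 1, 5, 4, 3, 2, 1, 6, 5, 4, 3, 2, 1, 23, 22, 21, 20, 19, 18,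
     17, 1, 2, 3, 3, 4, 5, 4, 5, 6, 7, 5, 6, 7, 8, 9, 6, 7, 8, 9, 10, 11, 23, 24, 25,
     26, 27, 28, 29, 7, 6, 5, 16, 4, 15, 14, 13, 3, 14, 13, 12, 12, 11, 10, 21, 2, 13,
     12, 11, 11, 10, 9, 20, 10, 9, 8, 19, 7, 18, 17, 16, 1, 12, 11, 10, 10, 9, 8, 19,
     9, 8, 7, 18, 6, 17, 16, 15, 8, 7, 6, 17, 5, 16, 15, 14, 4, 15, 14, 13, 13, 12, 11,
     22]"
    by (simp add: minform_def eucl_eq_sum_list rho_E8 roots_E8_def halfvec_def upt_rec Let_def)
  show ?thesis
    by (rule adjoint_product_eq_of_mset_eq[OF posroots_E8 distinct_roots_E8 assms])
      (simp_all only: num den, simp_all add: add_mset_commute)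
qed

lemma adjoint_product_eq_vogel_rhs:
  assumes "valid_type T" "even_or_odd \<phi>" "vogel T = (\<alpha>, \<beta>, \<gamma>)"
    and "\<forall>\<mu>\<in>posroots T. \<phi> (minform T \<mu> (rho T)) \<noteq> 0"
    and "\<phi> (\<beta> / 2) \<noteq> 0" "\<phi> (\<gamma> / 2) \<noteq> 0"
  shows "adjoint_product T \<phi> = vogel_rhs \<phi> (vogel T)"
proof (cases T)
  case (A n)
  with assms(3) have "\<gamma> = real n + 1"
    by simp
  with assms(6) have "\<phi> ((real n + 1) / 2) \<noteq> 0"
    by simp
  with assms(1,4) A show ?thesis
    by (simp add: adjoint_product_A vogel_rhs_minus_two[OF assms(2)] algebra_simps
        add_divide_distrib diff_divide_distrib)
next
  case (B n)
  with assms(3) have "\<beta> = 4"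
    by simp
  with assms(5) have "\<phi> 2 \<noteq> 0"
    by simp
  with assms(1,4) B show ?thesis
    by (simp add: adjoint_product_B vogel_rhs_minus_two[OF assms(2)] algebra_simps
        add_divide_distrib diff_divide_distrib)
next
  case (C n)
  with assms(3) have "\<beta> = 1" "\<gamma> = real n + 2"
    by simp_all
  with assms(5,6) have "\<phi> (1 / 2) \<noteq> 0" "\<phi> ((real n + 2) / 2) \<noteq> 0"
    by (simp_all add: diff_divide_distrib)
  with assms(1,4) C show ?thesis
    by (simp add: adjoint_product_C vogel_rhs_minus_two[OF assms(2)] algebra_simps
        add_divide_distrib diff_divide_distrib)
next
  case (D n)
  with assms(3) have "\<beta> = 4" "\<gamma> = 2 * real n - 4"
    by simp_all
  with assms(5,6) have "\<phi> 2 \<noteq> 0" "\<phi> (real n - 2) \<noteq> 0"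
    by (simp_all add: diff_divide_distrib)
  with assms(1,4) D show ?thesis
    by (simp add: adjoint_product_D vogel_rhs_minus_two[OF assms(2)] algebra_simps
        add_divide_distrib diff_divide_distrib)
next
  case G2
  with assms(2,4) show ?thesis
    by (simp add: adjoint_product_G2 vogel_rhs_minus_two[OF assms(2)])
next
  case F4
  with assms(2,4) show ?thesis
    by (simp add: adjoint_product_F4 vogel_rhs_minus_two[OF assms(2)])
next
  case E6
  with assms(2,4) show ?thesis
    by (simp add: adjoint_product_E6 vogel_rhs_minus_two[OF assms(2)])
next
  case E7
  with assms(2,4) show ?thesis
    by (simp add: adjoint_product_E7 vogel_rhs_minus_two[OF assms(2)])
next
  case E8
  with assms(2,4) show ?thesis
    by (simp add: adjoint_product_E8 vogel_rhs_minus_two[OF assms(2)])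
qed

theorem lemma1:
  fixes T :: lie_type and \<phi> :: "real \<Rightarrow> real"
    and \<alpha> \<beta> \<gamma> t :: real
  assumes "valid_type T"
    and "vogel T = (\<alpha>, \<beta>, \<gamma>)"
    and "t = \<alpha> + \<beta> + \<gamma>"
    and "(\<forall>x. \<phi> (- x) = \<phi> x) \<or> (\<forall>x. \<phi> (- x) = - \<phi> x)"
    and "\<forall>\<mu>\<in>posroots T. \<phi> (minform T \<mu> (rho T)) \<noteq> 0"
    and "\<phi> (\<alpha> / 2) \<noteq> 0" and "\<phi> (\<beta> / 2) \<noteq> 0" and "\<phi> (\<gamma> / 2) \<noteq> 0"
  shows "(\<Prod>\<mu>\<in>posroots T. \<phi> (minform T \<mu> (vadd (max_root T) (rho T)))
                            / \<phi> (minform T \<mu> (rho T)))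
         = \<phi> ((\<alpha> - 2 * t) / 2) / \<phi> (\<alpha> / 2)
           * (\<phi> ((\<beta> - 2 * t) / 2) / \<phi> (\<beta> / 2))
           * (\<phi> ((\<gamma> - 2 * t) / 2) / \<phi> (\<gamma> / 2))"
proof -
  have par: "even_or_odd \<phi>"
    using assms(4) by (simp add: even_or_odd_def)
  have "adjoint_product T \<phi> = vogel_rhs \<phi> (vogel T)"
    by (rule adjoint_product_eq_vogel_rhs[OF assms(1) par assms(2,5,7,8)])
  then show ?thesis
    using assms(2,3) by (simp add: adjoint_product_def vogel_rhs_def)
qed

end
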